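(* Converting IFAs to nondeterministic finite automata requires a super-polynomial state blowup: there is no polynomial $p$ such that every IFA with $n$ states admits a nondeterministic finite automaton with at most $p(n)$ states accepting the same language.
   Context: A $\mathbb{Q}$-weighted automaton $\mathcal{A} = (Q, \Sigma, M, \alpha, \eta)$ consists of a finite state set $Q$, finite alphabet $\Sigma$, $M : \Sigma \to \mathbb{Q}^{Q\times Q}$, initial row vector $\alpha \in \mathbb{Q}^Q$, final column vector $\eta \in \mathbb{Q}^Q$; with $M(a_1\cdots a_k) = M(a_1)\cdots M(a_k)$, it assigns $L_\mathcal{A}(w) = \alpha M(w)\eta$ to each $w \in \Sigma^*$. It is an IFA if $L_\mathcal{A}(w) \in \{0,1\}$ for all $w$, and then its language is $L(\mathcal{A}) = \{w \mid L_\mathcal{A}(w) = 1\}$. The number of states of $\mathcal{A}$ is $|Q|$. *)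

theory Defs
  imports "Jordan_Normal_Form.Matrix" "HOL-Computational_Algebra.Polynomial"
begin

definition wa_wf :: "nat \<Rightarrow> nat set \<Rightarrow> (nat \<Rightarrow> rat mat) \<Rightarrow> rat vec \<Rightarrow> rat vec \<Rightarrow> bool" where
  "wa_wf n Sig M alpha eta \<longleftrightarrow> finite Sig \<and> dim_vec alpha = n \<and> dim_vec eta = n
     \<and> (\<forall>a\<in>Sig. M a \<in> carrier_mat n n)"

definition wa_mat :: "nat \<Rightarrow> (nat \<Rightarrow> rat mat) \<Rightarrow> nat list \<Rightarrow> rat mat" where
  "wa_mat n M w = foldr (\<lambda>a B. M a * B) w (1\<^sub>m n)"

definition wa_weight :: "nat \<Rightarrow> (nat \<Rightarrow> rat mat) \<Rightarrow> rat vec \<Rightarrow> rat vec \<Rightarrow> nat list \<Rightarrow> rat" where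
  "wa_weight n M alpha eta w = alpha \<bullet> (wa_mat n M w *\<^sub>v eta)"

definition is_IFA :: "nat \<Rightarrow> nat set \<Rightarrow> (nat \<Rightarrow> rat mat) \<Rightarrow> rat vec \<Rightarrow> rat vec \<Rightarrow> bool" where
  "is_IFA n Sig M alpha eta \<longleftrightarrow> wa_wf n Sig M alpha eta
     \<and> (\<forall>w\<in>lists Sig. wa_weight n M alpha eta w \<in> {0, 1})"

definition ifa_lang :: "nat \<Rightarrow> nat set \<Rightarrow> (nat \<Rightarrow> rat mat) \<Rightarrow> rat vec \<Rightarrow> rat vec \<Rightarrow> nat list set" where
  "ifa_lang n Sig M alpha eta = {w \<in> lists Sig. wa_weight n M alpha eta w = 1}"

definition is_NFA :: "'q set \<Rightarrow> nat set \<Rightarrow> ('q \<Rightarrow> nat \<Rightarrow> 'q set) \<Rightarrow> 'q set \<Rightarrow> 'q set \<Rightarrow> bool" where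
  "is_NFA Q Sig delta I F \<longleftrightarrow> finite Q \<and> finite Sig \<and> I \<subseteq> Q \<and> F \<subseteq> Q
     \<and> (\<forall>q\<in>Q. \<forall>a\<in>Sig. delta q a \<subseteq> Q)"

fun nfa_reach :: "('q \<Rightarrow> nat \<Rightarrow> 'q set) \<Rightarrow> 'q set \<Rightarrow> nat list \<Rightarrow> 'q set" where
  "nfa_reach delta S [] = S"
| "nfa_reach delta S (a # w) = nfa_reach delta (\<Union>q\<in>S. delta q a) w"

definition nfa_lang :: "nat set \<Rightarrow> ('q \<Rightarrow> nat \<Rightarrow> 'q set) \<Rightarrow> 'q set \<Rightarrow> 'q set \<Rightarrow> nat list set" where
  "nfa_lang Sig delta I F = {w \<in> lists Sig. nfa_reach delta I w \<inter> F \<noteq> {}}"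

end

theory Submission
  imports Defs "HOL-Number_Theory.Cong"
begin

text \<open>
  Over a one-letter alphabet, a rational sequence in the span of a shift-closed family of
  n sequences is the weight function of an n-state weighted automaton, and such families
  add in size under sums and multiply under pointwise products. Feed the indicators of
  d \<bar> m for k = 3^t pairwise coprime moduli d_i = (i + 1) K + 1 into a depth-t ternary
  tree of the quadratic gate 1 - x - y - z + xy + xz + yz: the result is an IFA with at
  most (7 (kK + 1))^(2^t) states accepting every multiple of N = \<Prod> d_i but no length
  divisible by all moduli but one. An NFA with fewer than N states accepting the word of
  length N |Q| has a cycle of length c \<le> |Q| < N; some d_i does not divide c, and pumping
  the cycle \<Prod>_{j \<noteq> i} d_j times produces exactly such a forbidden length. So any
  equivalent NFA has at least N \<ge> K^(3^t) states, and for t = 8 deg p + 4 this exceeds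
  p applied to the IFA size.
\<close>

section \<open>Sequences spanned by shift-closed families\<close>

definition shift_closed :: "(nat \<Rightarrow> 'a) set \<Rightarrow> bool" where
  "shift_closed H \<longleftrightarrow> (\<forall>h\<in>H. (\<lambda>m. h (Suc m)) \<in> H)"

definition shift_representable :: "nat \<Rightarrow> (nat \<Rightarrow> 'a::comm_semiring_1) \<Rightarrow> bool" where
  "shift_representable n f \<longleftrightarrow>
     (\<exists>H c. finite H \<and> card H \<le> n \<and> shift_closed H \<and> (\<forall>m. f m = (\<Sum>h\<in>H. c h * h m)))"

lemma shift_representable_mono:
  "shift_representable a f \<Longrightarrow> a \<le> b \<Longrightarrow> shift_representable b f"
  unfolding shift_representable_def by (meson order_trans)

lemma shift_representable_const: "shift_representable 1 (\<lambda>_. c)"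
  unfolding shift_representable_def shift_closed_def
  by (intro exI[of _ "{\<lambda>_. 1}"] exI[of _ "\<lambda>_. c"]) simp

lemma shift_representable_scale:
  assumes "shift_representable n f"
  shows "shift_representable n (\<lambda>m. c * f m)"
proof -
  obtain H \<alpha> where H: "finite H" "card H \<le> n" "shift_closed H" "\<And>m. f m = (\<Sum>h\<in>H. \<alpha> h * h m)"
    using assms unfolding shift_representable_def by blast
  then have "c * f m = (\<Sum>h\<in>H. (c * \<alpha> h) * h m)" for m
    by (simp add: sum_distrib_left mult.assoc)
  then show ?thesis
    unfolding shift_representable_def using H(1-3) by (intro exI[of _ H] exI[of _ "\<lambda>h. c * \<alpha> h"]) simp
qed

lemma shift_representable_add:
  assumes "shift_representable a f" "shift_representable b g"
  shows "shift_representable (a + b) (\<lambda>m. f m + g m)"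
proof -
  obtain H \<alpha> where H: "finite H" "card H \<le> a" "shift_closed H" "\<And>m. f m = (\<Sum>h\<in>H. \<alpha> h * h m)"
    using assms(1) unfolding shift_representable_def by blast
  obtain H' \<beta> where H': "finite H'" "card H' \<le> b" "shift_closed H'" "\<And>m. g m = (\<Sum>h\<in>H'. \<beta> h * h m)"
    using assms(2) unfolding shift_representable_def by blast
  define \<gamma> where "\<gamma> h = (if h \<in> H then \<alpha> h else 0) + (if h \<in> H' then \<beta> h else 0)" for h
  have "f m + g m = (\<Sum>h\<in>H \<union> H'. \<gamma> h * h m)" for m
  proof -
    have "(\<Sum>h\<in>H \<union> H'. \<gamma> h * h m) =
        (\<Sum>h\<in>H \<union> H'. if h \<in> H then \<alpha> h * h m else 0) + (\<Sum>h\<in>H \<union> H'. if h \<in> H' then \<beta> h * h m else 0)"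
      unfolding sum.distrib[symmetric] by (rule sum.cong) (auto simp: \<gamma>_def distrib_right)
    also have "\<dots> = f m + g m"
      using H H' by (simp add: sum.If_cases Int_absorb1)
    finally show ?thesis by simp
  qed
  moreover have "card (H \<union> H') \<le> a + b"
    using card_Un_le[of H H'] H(2) H'(2) by linarith
  moreover have "shift_closed (H \<union> H')"
    using H(3) H'(3) by (auto simp: shift_closed_def)
  ultimately show ?thesis
    unfolding shift_representable_def using H(1) H'(1) by blast
qed

lemma shift_representable_mult:
  fixes f g :: "nat \<Rightarrow> 'a::comm_semiring_1"
  assumes "shift_representable a f" "shift_representable b g"
  shows "shift_representable (a * b) (\<lambda>m. f m * g m)"
proof -
  obtain H \<alpha> where H: "finite H" "card H \<le> a" "shift_closed H" "\<And>m. f m = (\<Sum>h\<in>H. \<alpha> h * h m)"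
    using assms(1) unfolding shift_representable_def by blast
  obtain H' \<beta> where H': "finite H'" "card H' \<le> b" "shift_closed H'" "\<And>m. g m = (\<Sum>h\<in>H'. \<beta> h * h m)"
    using assms(2) unfolding shift_representable_def by blast
  define P where "P = (\<lambda>(u :: nat \<Rightarrow> 'a, v) m. u m * v m)"
  define \<gamma> where "\<gamma> h = (\<Sum>x\<in>{x \<in> H \<times> H'. P x = h}. \<alpha> (fst x) * \<beta> (snd x))" for h
  have fin: "finite (H \<times> H')"
    using H(1) H'(1) by simp
  have "f m * g m = (\<Sum>h\<in>P ` (H \<times> H'). \<gamma> h * h m)" for m
  proof -
    have "(\<Sum>h\<in>P ` (H \<times> H'). \<gamma> h * h m) =
        (\<Sum>h\<in>P ` (H \<times> H'). \<Sum>x\<in>{x \<in> H \<times> H'. P x = h}. \<alpha> (fst x) * \<beta> (snd x) * P x m)"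
      unfolding \<gamma>_def sum_distrib_right by (rule sum.cong) auto
    also have "\<dots> = (\<Sum>x\<in>H \<times> H'. \<alpha> (fst x) * \<beta> (snd x) * P x m)"
      by (rule sum.image_gen[symmetric, OF fin])
    also have "\<dots> = (\<Sum>u\<in>H. \<Sum>v\<in>H'. (\<alpha> u * u m) * (\<beta> v * v m))"
      unfolding sum.cartesian_product by (rule sum.cong) (auto simp: P_def ac_simps)
    also have "\<dots> = f m * g m"
      using H(4) H'(4) by (simp add: sum_product)
    finally show ?thesis by simp
  qed
  moreover have "card (P ` (H \<times> H')) \<le> a * b"
  proof -
    have "card (P ` (H \<times> H')) \<le> card H * card H'"
      using card_image_le[OF fin] by (simp add: card_cartesian_product)
    also have "\<dots> \<le> a * b"
      using H(2) H'(2) by (rule mult_le_mono)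
    finally show ?thesis .
  qed
  moreover have "shift_closed (P ` (H \<times> H'))"
    unfolding shift_closed_def
  proof
    fix h assume "h \<in> P ` (H \<times> H')"
    then obtain u v where "u \<in> H" "v \<in> H'" "h = P (u, v)"
      by blast
    moreover have "(\<lambda>m. P (u, v) (Suc m)) = P (\<lambda>m. u (Suc m), \<lambda>m. v (Suc m))"
      by (simp add: P_def)
    ultimately show "(\<lambda>m. h (Suc m)) \<in> P ` (H \<times> H')"
      using H(3) H'(3) unfolding shift_closed_def by auto
  qed
  ultimately show ?thesis
    unfolding shift_representable_def using finite_imageI[OF fin] by blast
qed

lemma shift_representable_dvd:
  assumes "0 < d"
  shows "shift_representable d (\<lambda>m. of_bool (d dvd m) :: 'a::comm_semiring_1)"
proof -
  define r where "r j = (\<lambda>m. of_bool (d dvd m + j) :: 'a)" for j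
  have "(\<lambda>m. r j (Suc m)) = r (Suc j mod d)" for j
    unfolding r_def by (simp add: dvd_eq_mod_eq_0 mod_add_right_eq)
  then have "shift_closed (r ` {..<d})"
    unfolding shift_closed_def using assms by auto
  moreover have "of_bool (d dvd m) = (\<Sum>h\<in>r ` {..<d}. of_bool (h = r 0) * h m)" for m
  proof -
    have "(\<Sum>h\<in>r ` {..<d}. of_bool (h = r 0) * h m) = (\<Sum>h\<in>r ` {..<d}. if h = r 0 then r 0 m else 0)"
      by (rule sum.cong) auto
    also have "\<dots> = r 0 m"
      using assms by simp
    finally show ?thesis
      by (simp add: r_def)
  qed
  moreover have "card (r ` {..<d}) \<le> d"
    using card_image_le[of "{..<d}" r] by simp
  ultimately show ?thesis
    unfolding shift_representable_def
    by (intro exI[of _ "r ` {..<d}"] exI[of _ "\<lambda>h. of_bool (h = r 0)"]) simp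
qed

section \<open>Trees of quadratic gates\<close>

text \<open>
  On 0/1 inputs the gate is 1 at (1, 1, 1) and 0 when exactly one input is 0. Being quadratic
  rather than cubic like x y z, a depth-t tree of gates needs (7 D)^(2^t) rather than D^(3^t)
  states, while still reading 3^t leaves.
\<close>

definition tri_gate :: "'a::comm_ring_1 \<Rightarrow> 'a \<Rightarrow> 'a \<Rightarrow> 'a" where
  "tri_gate x y z = 1 - x - y - z + x * y + x * z + y * z"

lemma tri_gate_01:
  "x \<in> {0, 1} \<Longrightarrow> y \<in> {0, 1} \<Longrightarrow> z \<in> {0, 1} \<Longrightarrow> tri_gate x y z \<in> {0, 1}"
  by (auto simp: tri_gate_def)

lemma shift_representable_tri_gate:
  assumes "shift_representable D f1" "shift_representable D f2" "shift_representable D f3" "1 \<le> D"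
  shows "shift_representable (7 * D\<^sup>2) (\<lambda>m. tri_gate (f1 m) (f2 m) (f3 m))"
proof -
  have "shift_representable (1 + D + D + D + D * D + D * D + D * D)
      (\<lambda>m. 1 + (-1) * f1 m + (-1) * f2 m + (-1) * f3 m + f1 m * f2 m + f1 m * f3 m + f2 m * f3 m)"
    by (intro shift_representable_add shift_representable_scale shift_representable_mult
        shift_representable_const assms(1-3))
  moreover have "1 + D + D + D + D * D + D * D + D * D \<le> 7 * D\<^sup>2"
  proof -
    have "1 \<le> D * D" "D \<le> D * D"
      using assms(4) by simp_all
    then show ?thesis
      unfolding power2_eq_square by linarith
  qed
  ultimately show ?thesis
    unfolding tri_gate_def by (simp add: shift_representable_mono)
qed

lemma mult_power_add_less:
  fixes b c i :: nat
  assumes "c < b" "i < b ^ t"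
  shows "c * b ^ t + i < b ^ Suc t"
proof -
  have "c * b ^ t + i < Suc c * b ^ t"
    using assms(2) by simp
  also have "\<dots> \<le> b * b ^ t"
    using assms(1) by (intro mult_le_mono1) simp
  finally show ?thesis
    by simp
qed

fun gate_tree :: "nat \<Rightarrow> (nat \<Rightarrow> 'a::comm_ring_1) \<Rightarrow> 'a" where
  "gate_tree 0 v = v 0"
| "gate_tree (Suc t) v =
     tri_gate (gate_tree t v) (gate_tree t (\<lambda>i. v (3^t + i))) (gate_tree t (\<lambda>i. v (2 * 3^t + i)))"

lemma gate_tree_01: "(\<And>i. i < 3^t \<Longrightarrow> v i \<in> {0, 1}) \<Longrightarrow> gate_tree t v \<in> {0, 1}"
proof (induction t arbitrary: v)
  case (Suc t)
  show ?case
    unfolding gate_tree.simps by (intro tri_gate_01 Suc.IH Suc.prems) auto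
qed simp

lemma gate_tree_one: "(\<And>i. i < 3^t \<Longrightarrow> v i = 1) \<Longrightarrow> gate_tree t v = 1"
proof (induction t arbitrary: v)
  case (Suc t)
  have "gate_tree t v = 1" "gate_tree t (\<lambda>i. v (3^t + i)) = 1" "gate_tree t (\<lambda>i. v (2 * 3^t + i)) = 1"
    by (intro Suc.IH Suc.prems; simp)+
  then show ?case by (simp add: tri_gate_def)
qed simp

lemma gate_tree_zero:
  assumes "i0 < 3^t" "v i0 = 0" "\<And>i. i < 3^t \<Longrightarrow> i \<noteq> i0 \<Longrightarrow> v i = 1"
  shows "gate_tree t v = 0"
  using assms
proof (induction t arbitrary: v i0)
  case (Suc t)
  let ?u = "\<lambda>c i. v (c * 3^t + i)"
  have split: "gate_tree (Suc t) v = tri_gate (gate_tree t (?u 0)) (gate_tree t (?u 1)) (gate_tree t (?u 2))"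
    by simp
  have one: "gate_tree t (?u c) = 1" if "c < 3" "\<not> (c * 3^t \<le> i0 \<and> i0 < Suc c * 3^t)" for c
    by (rule gate_tree_one, rule Suc.prems(3)) (use that mult_power_add_less in auto)
  have zero: "gate_tree t (?u c) = 0" if "c * 3^t \<le> i0" "i0 < Suc c * 3^t" for c
  proof (rule Suc.IH)
    show "i0 - c * 3^t < 3^t" "?u c (i0 - c * 3^t) = 0"
      using that Suc.prems(2) by auto
    have "c < 3"
      using le_less_trans[OF that(1) Suc.prems(1)] by simp
    then show "?u c i = 1" if "i < 3^t" "i \<noteq> i0 - c * 3^t" for i
      using that \<open>c * 3^t \<le> i0\<close> by (intro Suc.prems(3) mult_power_add_less) auto
  qed
  consider "i0 < 3^t" | "3^t \<le> i0" "i0 < 2 * 3^t" | "2 * 3^t \<le> i0"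
    by linarith
  then show ?case
  proof cases
    case 1
    then show ?thesis
      unfolding split using zero[of 0] one[of 1] one[of 2] by (simp add: tri_gate_def)
  next
    case 2
    then show ?thesis
      unfolding split using zero[of 1] one[of 0] one[of 2] by (simp add: tri_gate_def)
  next
    case 3
    then show ?thesis
      unfolding split using zero[of 2] one[of 0] one[of 1] Suc.prems(1) by (simp add: tri_gate_def)
  qed
qed simp

fun gate_tree_size :: "nat \<Rightarrow> nat \<Rightarrow> nat" where
  "gate_tree_size D 0 = D"
| "gate_tree_size D (Suc t) = 7 * (gate_tree_size D t)\<^sup>2"

lemma gate_tree_size_pos: "1 \<le> D \<Longrightarrow> 1 \<le> gate_tree_size D t"
  by (induction t) (auto simp: power2_eq_square)

lemma gate_tree_size_le: "7 * gate_tree_size D t \<le> (7 * D) ^ 2 ^ t"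
proof (induction t)
  case (Suc t)
  have "7 * gate_tree_size D (Suc t) = (7 * gate_tree_size D t)\<^sup>2"
    by (simp add: power2_eq_square)
  also have "\<dots> \<le> ((7 * D) ^ 2 ^ t)\<^sup>2"
    using Suc.IH by (rule power_mono) simp
  also have "\<dots> = (7 * D) ^ (2 ^ t * 2)"
    by (rule power_mult[symmetric])
  finally show ?case
    by (simp add: mult.commute)
qed simp

lemma shift_representable_gate_tree:
  assumes "\<And>i. i < 3^t \<Longrightarrow> shift_representable D (\<lambda>m. v m i)" "1 \<le> D"
  shows "shift_representable (gate_tree_size D t) (\<lambda>m. gate_tree t (v m))"
  using assms(1)
proof (induction t arbitrary: v)
  case (Suc t)
  have "shift_representable (gate_tree_size D t) (\<lambda>m. gate_tree t (\<lambda>i. v m (c * 3^t + i)))"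
    if "c < 3" for c
    by (intro Suc.IH Suc.prems mult_power_add_less that)
  from this[of 0] this[of 1] this[of 2] show ?case
    using gate_tree_size_pos[OF assms(2)] by (simp add: shift_representable_tri_gate)
qed simp

section \<open>Unary weighted automata\<close>

lemma wa_mat_replicate_Suc:
  "wa_mat n M (replicate (Suc m) a) = M a * wa_mat n M (replicate m a)"
  by (simp add: wa_mat_def)

lemma wa_mat_replicate_carrier:
  "M a \<in> carrier_mat n n \<Longrightarrow> wa_mat n M (replicate m a) \<in> carrier_mat n n"
  by (induction m) (auto simp: wa_mat_def)

lemma replicate_in_lists: "replicate m a \<in> lists {a}"
  by (induction m) auto

definition shift_matrix :: "nat \<Rightarrow> (nat \<Rightarrow> nat \<Rightarrow> rat) \<Rightarrow> rat mat" where
  "shift_matrix n e = mat n n (\<lambda>(j, l). of_bool (e l = (\<lambda>m. e j (Suc m))))"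

lemma shift_matrix_mult_vec:
  assumes "bij_betw e {0..<n} H" "shift_closed H"
  shows "shift_matrix n e *\<^sub>v vec n (\<lambda>l. e l m) = vec n (\<lambda>j. e j (Suc m))"
proof (rule eq_vecI)
  fix j assume "j < dim_vec (vec n (\<lambda>j. e j (Suc m)))"
  then have j: "j < n"
    by simp
  then have "(\<lambda>m. e j (Suc m)) \<in> H"
    using assms by (auto simp: bij_betw_def shift_closed_def)
  then obtain l0 where l0: "l0 < n" "e l0 = (\<lambda>m. e j (Suc m))"
    using assms(1) by (auto simp: bij_betw_def)
  have "(shift_matrix n e *\<^sub>v vec n (\<lambda>l. e l m)) $ j = (\<Sum>l<n. of_bool (e l = e l0) * e l m)"
    using j l0(2) by (simp add: shift_matrix_def scalar_prod_def atLeast0LessThan)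
  also have "\<dots> = (\<Sum>l<n. of_bool (l = l0) * e l m)"
    using assms(1) l0(1) by (intro sum.cong) (auto simp: bij_betw_def inj_on_def)
  also have "\<dots> = e j (Suc m)"
    using l0 by simp
  finally show "(shift_matrix n e *\<^sub>v vec n (\<lambda>l. e l m)) $ j = vec n (\<lambda>j. e j (Suc m)) $ j"
    using j by simp
qed (simp add: shift_matrix_def)

lemma wa_mat_shift_matrix_replicate:
  assumes "bij_betw e {0..<n} H" "shift_closed H"
  shows "wa_mat n (\<lambda>_. shift_matrix n e) (replicate m a) *\<^sub>v vec n (\<lambda>l. e l 0) = vec n (\<lambda>j. e j m)"
proof (induction m)
  case 0
  show ?case
    by (auto simp: wa_mat_def)
next
  case (Suc m)
  have carrier: "shift_matrix n e \<in> carrier_mat n n"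
    by (simp add: shift_matrix_def)
  then have "wa_mat n (\<lambda>_. shift_matrix n e) (replicate m a) \<in> carrier_mat n n"
    by (rule wa_mat_replicate_carrier)
  then have "wa_mat n (\<lambda>_. shift_matrix n e) (replicate (Suc m) a) *\<^sub>v vec n (\<lambda>l. e l 0) =
      shift_matrix n e *\<^sub>v (wa_mat n (\<lambda>_. shift_matrix n e) (replicate m a) *\<^sub>v vec n (\<lambda>l. e l 0))"
    unfolding wa_mat_replicate_Suc using carrier by simp
  then show ?case
    using Suc.IH shift_matrix_mult_vec[OF assms] by simp
qed

lemma shift_representable_imp_unary_wa:
  fixes f :: "nat \<Rightarrow> rat"
  assumes "shift_representable n f"
  shows "\<exists>n'\<le>n. \<exists>M \<alpha> \<eta>. wa_wf n' {a} M \<alpha> \<eta> \<and> (\<forall>m. wa_weight n' M \<alpha> \<eta> (replicate m a) = f m)"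
proof -
  obtain H c where H: "finite H" "card H \<le> n" "shift_closed H" "\<And>m. f m = (\<Sum>h\<in>H. c h * h m)"
    using assms unfolding shift_representable_def by blast
  obtain e where e: "bij_betw e {0..<card H} H"
    using ex_bij_betw_nat_finite[OF H(1)] by blast
  define M where "M = (\<lambda>_ :: nat. shift_matrix (card H) e)"
  define \<alpha> where "\<alpha> = vec (card H) (\<lambda>j. c (e j))"
  define \<eta> where "\<eta> = vec (card H) (\<lambda>l. e l 0)"
  have "wa_weight (card H) M \<alpha> \<eta> (replicate m a) = f m" for m
  proof -
    have "wa_weight (card H) M \<alpha> \<eta> (replicate m a) = (\<Sum>j\<in>{0..<card H}. c (e j) * e j m)"
      unfolding wa_weight_def M_def \<eta>_def wa_mat_shift_matrix_replicate[OF e H(3)]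
      by (simp add: scalar_prod_def \<alpha>_def)
    also have "\<dots> = (\<Sum>h\<in>H. c h * h m)"
      using sum.reindex_bij_betw[OF e, of "\<lambda>h. c h * h m"] by simp
    finally show ?thesis
      using H(4) by simp
  qed
  moreover have "wa_wf (card H) {a} M \<alpha> \<eta>"
    by (simp add: wa_wf_def M_def \<alpha>_def \<eta>_def shift_matrix_def)
  ultimately show ?thesis
    using H(2) by blast
qed

lemma unary_IFA_of_01_sequence:
  fixes f :: "nat \<Rightarrow> rat"
  assumes "shift_representable n f" "\<And>m. f m \<in> {0, 1}"
  shows "\<exists>n'\<le>n. \<exists>M \<alpha> \<eta>. is_IFA n' {a} M \<alpha> \<eta> \<and>
           (\<forall>m. replicate m a \<in> ifa_lang n' {a} M \<alpha> \<eta> \<longleftrightarrow> f m = 1)"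
proof -
  obtain n' M \<alpha> \<eta> where "n' \<le> n" and wf: "wa_wf n' {a} M \<alpha> \<eta>"
    and weight: "\<And>m. wa_weight n' M \<alpha> \<eta> (replicate m a) = f m"
    using shift_representable_imp_unary_wa[OF assms(1)] by blast
  have "wa_weight n' M \<alpha> \<eta> w \<in> {0, 1}" if "w \<in> lists {a}" for w
  proof -
    have "w = replicate (length w) a"
      using that by (induction w) auto
    then show ?thesis
      using weight[of "length w"] assms(2)[of "length w"] by argo
  qed
  then have "is_IFA n' {a} M \<alpha> \<eta>"
    unfolding is_IFA_def using wf by simp
  moreover have "replicate m a \<in> ifa_lang n' {a} M \<alpha> \<eta> \<longleftrightarrow> f m = 1" for m
    unfolding ifa_lang_def using weight[of m] replicate_in_lists[of m a] by simp
  ultimately show ?thesis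
    using \<open>n' \<le> n\<close> by blast
qed

lemma gate_tree_moduli_IFA:
  fixes d :: "nat \<Rightarrow> nat"
  assumes "\<And>i. i < 3^t \<Longrightarrow> 0 < d i" "\<And>i. i < 3^t \<Longrightarrow> d i \<le> D"
  shows "\<exists>n\<le>(7 * D) ^ 2 ^ t. \<exists>M \<alpha> \<eta>. is_IFA n {a} M \<alpha> \<eta> \<and>
           (\<forall>m. replicate m a \<in> ifa_lang n {a} M \<alpha> \<eta> \<longleftrightarrow>
                gate_tree t (\<lambda>i. of_bool (d i dvd m)) = (1 :: rat))"
proof (rule unary_IFA_of_01_sequence)
  have "1 \<le> D"
    using assms[of 0] by simp
  then have "shift_representable (gate_tree_size D t) (\<lambda>m. gate_tree t (\<lambda>i. of_bool (d i dvd m) :: rat))"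
    using assms by (intro shift_representable_gate_tree shift_representable_mono[OF shift_representable_dvd])
  moreover have "gate_tree_size D t \<le> (7 * D) ^ 2 ^ t"
    using gate_tree_size_le[of D t] by linarith
  ultimately show "shift_representable ((7 * D) ^ 2 ^ t) (\<lambda>m. gate_tree t (\<lambda>i. of_bool (d i dvd m) :: rat))"
    by (rule shift_representable_mono)
  show "gate_tree t (\<lambda>i. of_bool (d i dvd m)) \<in> {0, 1 :: rat}" for m
    by (rule gate_tree_01) simp
qed

section \<open>Pumping in unary NFAs\<close>

definition nfa_step :: "('q \<Rightarrow> 'a \<Rightarrow> 'q set) \<Rightarrow> 'a \<Rightarrow> 'q rel" where
  "nfa_step \<delta> a = {(q, q'). q' \<in> \<delta> q a}"

lemma nfa_reach_replicate: "nfa_reach \<delta> S (replicate m a) = (nfa_step \<delta> a ^^ m) `` S"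
proof (induction m arbitrary: S)
  case (Suc m)
  have "nfa_reach \<delta> S (replicate (Suc m) a) = (nfa_step \<delta> a ^^ m) `` (nfa_step \<delta> a `` S)"
    using Suc.IH by (simp add: nfa_step_def Image_def) blast
  also have "\<dots> = (nfa_step \<delta> a ^^ Suc m) `` S"
    by (simp only: relpow.simps(2) relpow_commute[symmetric] relcomp_Image)
  finally show ?case .
qed simp

lemma relpow_repeated_state:
  assumes "finite Q" "x \<in> Q" "R `` Q \<subseteq> Q" "(x, y) \<in> R ^^ m" "card Q \<le> m"
  shows "\<exists>z i c. 0 < c \<and> i + c \<le> card Q \<and>
           (x, z) \<in> R ^^ i \<and> (z, z) \<in> R ^^ c \<and> (z, y) \<in> R ^^ (m - (i + c))"
proof -
  obtain f where f: "f 0 = x" "f m = y" "\<And>i. i < m \<Longrightarrow> (f i, f (Suc i)) \<in> R"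
    using assms(4) unfolding relpow_fun_conv by blast
  have segment: "(f i, f (i + l)) \<in> R ^^ l" if "i + l \<le> m" for i l
    unfolding relpow_fun_conv using that f(3) by (intro exI[of _ "\<lambda>j. f (i + j)"]) auto
  have "f i \<in> Q" if "i \<le> m" for i
    using that
  proof (induction i)
    case (Suc i)
    then have "f i \<in> Q" "(f i, f (Suc i)) \<in> R"
      using f(3) by auto
    then show ?case
      using assms(3) by blast
  qed (use f(1) assms(2) in simp)
  then have "f ` {0..card Q} \<subseteq> Q"
    using assms(5) by auto
  then have "card (f ` {0..card Q}) < card {0..card Q}"
    using card_mono[OF assms(1)] by (simp add: le_imp_less_Suc)
  then have "\<not> inj_on f {0..card Q}"
    by (rule pigeonhole)
  then obtain i' j' where "i' \<le> card Q" "j' \<le> card Q" "i' \<noteq> j'" "f i' = f j'"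
    unfolding inj_on_def by auto
  then obtain i j where ij: "i < j" "j \<le> card Q" "f i = f j"
    by (intro that[of "min i' j'" "max i' j'"]) (auto simp: min_def max_def)
  then show ?thesis
    using segment[of 0 i] segment[of i "j - i"] segment[of j "m - j"] assms(5) f(1,2)
    by (intro exI[of _ "f i"] exI[of _ i] exI[of _ "j - i"]) simp
qed

lemma relpow_cycle_power: "(z, z) \<in> R ^^ c \<Longrightarrow> (z, z) \<in> R ^^ (T * c)"
proof (induction T)
  case (Suc T)
  then have "(z, z) \<in> R ^^ c O R ^^ (T * c)"
    by blast
  then show ?case
    by (simp add: relpow_add)
qed simp

lemma relpow_pumping:
  assumes "finite Q" "x \<in> Q" "R `` Q \<subseteq> Q" "(x, y) \<in> R ^^ m" "card Q \<le> m"
  shows "\<exists>c>0. c \<le> card Q \<and> (\<forall>T. (x, y) \<in> R ^^ (m + T * c))"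
proof -
  obtain z i c where c: "0 < c" "i + c \<le> card Q"
    and path: "(x, z) \<in> R ^^ i" "(z, z) \<in> R ^^ c" "(z, y) \<in> R ^^ (m - (i + c))"
    using relpow_repeated_state[OF assms] by blast
  have "(x, y) \<in> R ^^ (i + (Suc T * c + (m - (i + c))))" for T
    unfolding relpow_add using path relpow_cycle_power[OF path(2)] by blast
  moreover have "i + (Suc T * c + (m - (i + c))) = m + T * c" for T
    using c assms(5) by simp
  ultimately have "(x, y) \<in> R ^^ (m + T * c)" for T
    by metis
  then show ?thesis
    using c by auto
qed

lemma unary_nfa_pumping:
  assumes "is_NFA Q {a} \<delta> I F" "replicate m a \<in> nfa_lang {a} \<delta> I F" "card Q \<le> m"
  shows "\<exists>c>0. c \<le> card Q \<and> (\<forall>T. replicate (m + T * c) a \<in> nfa_lang {a} \<delta> I F)"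
proof -
  obtain x y where "x \<in> I" "y \<in> F" "(x, y) \<in> nfa_step \<delta> a ^^ m"
    using assms(2) by (auto simp: nfa_lang_def nfa_reach_replicate)
  moreover have "finite Q" "I \<subseteq> Q" "nfa_step \<delta> a `` Q \<subseteq> Q"
    using assms(1) by (auto simp: is_NFA_def nfa_step_def)
  ultimately obtain c where "c > 0" "c \<le> card Q" "\<And>T. (x, y) \<in> nfa_step \<delta> a ^^ (m + T * c)"
    using relpow_pumping[of Q x "nfa_step \<delta> a" y m] assms(3) by blast
  then have "(nfa_step \<delta> a ^^ (m + T * c)) `` I \<inter> F \<noteq> {}" for T
    using \<open>x \<in> I\<close> \<open>y \<in> F\<close> by blast
  then show ?thesis
    using \<open>c > 0\<close> \<open>c \<le> card Q\<close>
    by (auto simp: nfa_lang_def nfa_reach_replicate replicate_in_lists)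
qed

lemma prod_coprime_not_dvd:
  fixes d :: "'a \<Rightarrow> nat"
  assumes "\<And>i j. i \<in> A \<Longrightarrow> j \<in> A \<Longrightarrow> i \<noteq> j \<Longrightarrow> coprime (d i) (d j)" "0 < c" "c < (\<Prod>i\<in>A. d i)"
  shows "\<exists>i\<in>A. \<not> d i dvd c"
proof (rule ccontr)
  assume "\<not> ?thesis"
  then have "[c = 0] (mod (\<Prod>i\<in>A. d i))"
    using assms(1) by (intro coprime_cong_prod_nat) (auto simp: cong_0_iff)
  then show False
    using assms(2,3) by (simp add: cong_0_iff dvd_imp_le leD)
qed

lemma unary_nfa_card_ge_prod_moduli:
  fixes d :: "nat \<Rightarrow> nat"
  assumes nfa: "is_NFA Q {a} \<delta> I F"
    and lang: "\<And>m. replicate m a \<in> nfa_lang {a} \<delta> I F \<longleftrightarrow>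
                 gate_tree t (\<lambda>i. of_bool (d i dvd m)) = (1 :: 'b::comm_ring_1)"
    and pos: "\<And>i. i < 3^t \<Longrightarrow> 0 < d i"
    and coprime_d: "\<And>i j. i < 3^t \<Longrightarrow> j < 3^t \<Longrightarrow> i \<noteq> j \<Longrightarrow> coprime (d i) (d j)"
  shows "(\<Prod>i<3^t. d i) \<le> card Q"
proof (rule ccontr)
  define N where "N = (\<Prod>i<3^t. d i)"
  assume "\<not> ?thesis"
  then have small: "card Q < N"
    by (simp add: N_def)
  have dvd_N: "d i dvd N" if "i < 3^t" for i
    using that by (simp add: N_def dvd_prodI)
  define m0 where "m0 = N * card Q"
  have "gate_tree t (\<lambda>i. of_bool (d i dvd m0)) = (1 :: 'b)"
    by (rule gate_tree_one) (simp add: m0_def dvd_N dvd_mult2)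
  then have "replicate m0 a \<in> nfa_lang {a} \<delta> I F"
    using lang by blast
  moreover have "card Q \<le> m0"
  proof -
    have "0 < N"
      unfolding N_def by (intro prod_pos) (simp add: pos)
    then show ?thesis
      by (simp add: m0_def)
  qed
  ultimately obtain c where c: "0 < c" "c \<le> card Q" "\<And>T. replicate (m0 + T * c) a \<in> nfa_lang {a} \<delta> I F"
    using unary_nfa_pumping[OF nfa] by blast
  with small obtain i0 where i0: "i0 < 3^t" "\<not> d i0 dvd c"
    using prod_coprime_not_dvd[of "{..<3^t}" d c] coprime_d unfolding N_def by auto
  \<comment> \<open>Pumping the cycle T times makes the length divisible by every modulus except d i0.\<close>
  define T where "T = (\<Prod>j\<in>{..<3^t} - {i0}. d j)"
  have "gate_tree t (\<lambda>i. of_bool (d i dvd m0 + T * c)) = (0 :: 'b)"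
  proof (rule gate_tree_zero[OF i0(1)])
    have "coprime (d i0) T"
      unfolding T_def by (rule prod_coprime_right) (use coprime_d i0 in auto)
    then have "\<not> d i0 dvd T * c"
      using i0(2) by (simp add: coprime_dvd_mult_right_iff)
    then show "of_bool (d i0 dvd m0 + T * c) = (0 :: 'b)"
      using dvd_N[OF i0(1)] by (simp add: m0_def dvd_add_right_iff dvd_mult2)
    show "of_bool (d i dvd m0 + T * c) = (1 :: 'b)" if "i < 3^t" "i \<noteq> i0" for i
    proof -
      have "d i dvd T"
        unfolding T_def using that by (intro dvd_prodI) auto
      then show ?thesis
        using dvd_N[OF that(1)] by (simp add: m0_def dvd_mult2)
    qed
  qed
  then show False
    using lang c(3) by fastforce
qed

section \<open>Arithmetic estimates\<close>

lemma coprime_mult_add_one: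
  fixes a b K :: nat
  assumes "a \<le> b" "(b - a) dvd K"
  shows "coprime (a * K + 1) (b * K + 1)"
proof (rule coprimeI)
  fix g assume ga: "g dvd a * K + 1" and gb: "g dvd b * K + 1"
  then have "g dvd b * (a * K + 1) - a * (b * K + 1)"
    by (intro dvd_diff_nat dvd_mult)
  moreover have "b * (a * K + 1) - a * (b * K + 1) = b - a"
    by (simp add: algebra_simps)
  ultimately have "g dvd K"
    using assms(2) by (metis dvd_trans)
  then have "g dvd a * K"
    by simp
  with ga have "g dvd 1"
    using dvd_add_right_iff[of g "a * K" 1] by blast
  then show "is_unit g"
    by simp
qed

lemma coprime_Suc_mult_add_one:
  fixes K :: nat
  assumes "\<And>l. 0 < l \<Longrightarrow> l < k \<Longrightarrow> l dvd K" "i < k" "j < k" "i \<noteq> j"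
  shows "coprime (Suc i * K + 1) (Suc j * K + 1)"
proof (cases "i < j")
  case True
  then show ?thesis
    using assms by (intro coprime_mult_add_one) simp_all
next
  case False
  then have "coprime (Suc j * K + 1) (Suc i * K + 1)"
    using assms by (intro coprime_mult_add_one) simp_all
  then show ?thesis
    by (simp add: coprime_commute)
qed

lemma poly_le_sum_abs_coeff_mult_power:
  fixes p :: "real poly"
  assumes "0 \<le> x"
  shows "poly p x \<le> (\<Sum>i\<le>degree p. \<bar>coeff p i\<bar>) * (x + 1) ^ degree p"
proof -
  have "poly p x = (\<Sum>i\<le>degree p. coeff p i * x ^ i)"
    by (rule poly_altdef)
  also have "\<dots> \<le> (\<Sum>i\<le>degree p. \<bar>coeff p i\<bar> * (x + 1) ^ degree p)"
  proof (rule sum_mono)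
    fix i assume i: "i \<in> {..degree p}"
    have "coeff p i * x ^ i \<le> \<bar>coeff p i\<bar> * x ^ i"
      using assms by (intro mult_right_mono) auto
    also have "x ^ i \<le> (x + 1) ^ i"
      using assms by (intro power_mono) auto
    also have "(x + 1) ^ i \<le> (x + 1) ^ degree p"
      using assms i by (intro power_increasing) auto
    finally show "coeff p i * x ^ i \<le> \<bar>coeff p i\<bar> * (x + 1) ^ degree p"
      by (simp add: mult_left_mono)
  qed
  also have "\<dots> = (\<Sum>i\<le>degree p. \<bar>coeff p i\<bar>) * (x + 1) ^ degree p"
    by (simp add: sum_distrib_right)
  finally show ?thesis .
qed

lemma two_power_mult_le_three_power: "2 ^ t * (t + 2) \<le> 2 * (3::nat) ^ t"
proof (induction t)
  case (Suc t)
  have "2 ^ Suc t * (Suc t + 2) \<le> 3 * (2 ^ t * (t + 2))"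
    by simp
  also have "\<dots> \<le> 3 * (2 * 3 ^ t)"
    using Suc.IH by simp
  finally show ?case
    by simp
qed simp

lemma degree_exponent_le_three_power: "e * (3 * 2 ^ (8 * e + 4) + 1) + 1 \<le> (3::nat) ^ (8 * e + 4)"
proof -
  define t where "t = 8 * e + 4"
  have "2 * (2 ^ t * (4 * e + 3)) \<le> 2 * (3::nat) ^ t"
    using two_power_mult_le_three_power[of t] by (simp add: t_def algebra_simps)
  moreover have "e * (3 * 2 ^ t + 1) + 1 \<le> 2 ^ t * (4 * e + 3)"
  proof -
    have "1 \<le> (2::nat) ^ t" "e \<le> e * 2 ^ t"
      by simp_all
    then have "e + 1 \<le> e * 2 ^ t + 3 * 2 ^ t"
      by linarith
    then show ?thesis
      by (simp add: algebra_simps)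
  qed
  ultimately show ?thesis
    unfolding t_def by linarith
qed

lemma polynomial_of_state_bound_less_power:
  fixes C :: real and K n e :: nat
  defines "t \<equiv> 8 * e + 4"
  assumes "0 \<le> C" "C < real K" "3 ^ t + 7 \<le> K" "n \<le> (7 * (3 ^ t * K + 1)) ^ 2 ^ t"
  shows "C * (real n + 1) ^ e < real K ^ 3 ^ t"
proof -
  define X :: nat where "X = 3 * 2 ^ t"
  have "1 \<le> K"
    using assms(4) by simp
  have "7 * (3 ^ t * K + 1) \<le> 7 * (3 ^ t + 1) * K"
    using \<open>1 \<le> K\<close> by (simp add: algebra_simps)
  also have "\<dots> \<le> K * K * K"
    using assms(4) by (intro mult_le_mono) auto
  finally have "(7 * (3 ^ t * K + 1)) ^ 2 ^ t \<le> (K ^ 3) ^ 2 ^ t"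
    by (intro power_mono) (simp_all add: power3_eq_cube)
  with assms(5) have "n \<le> K ^ X"
    unfolding X_def power_mult by (rule le_trans)
  moreover have "1 \<le> K ^ X"
    using \<open>1 \<le> K\<close> by simp
  ultimately have "n + 1 \<le> 2 * K ^ X"
    by linarith
  also have "\<dots> \<le> K ^ Suc X"
    using assms(4) by simp
  finally have "real n + 1 \<le> real K ^ Suc X"
    by (metis of_nat_Suc of_nat_le_iff of_nat_power Suc_eq_plus1 add.commute)
  then have "(real n + 1) ^ e \<le> (real K ^ Suc X) ^ e"
    by (rule power_mono) simp
  then have "C * (real n + 1) ^ e \<le> C * real K ^ (Suc X * e)"
    unfolding power_mult using assms(2) by (rule mult_left_mono)
  also have "\<dots> < real K * real K ^ (Suc X * e)"
    using assms(3) \<open>1 \<le> K\<close> by (intro mult_strict_right_mono) simp_all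
  also have "\<dots> = real K ^ (e * (X + 1) + 1)"
    by (simp add: mult.commute)
  also have "\<dots> \<le> real K ^ 3 ^ t"
    using degree_exponent_le_three_power[of e] \<open>1 \<le> K\<close>
    by (intro power_increasing) (simp_all add: X_def t_def)
  finally show ?thesis .
qed

section \<open>IFAs that no small NFA recognises\<close>

lemma unary_IFA_beating_polynomial_NFA_size:
  fixes C :: real and e :: nat
  assumes "0 \<le> C"
  shows "\<exists>n M \<alpha> \<eta>. is_IFA n {a} M \<alpha> \<eta> \<and>
           (\<forall>(Q :: 'q set) \<delta> I F. is_NFA Q {a} \<delta> I F \<and> nfa_lang {a} \<delta> I F = ifa_lang n {a} M \<alpha> \<eta>
              \<longrightarrow> C * (real n + 1) ^ e < real (card Q))"
proof -
  define t where "t = 8 * e + 4"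
  \<comment> \<open>K exceeds C and is divisible by every difference of indices below 3^t.\<close>
  define K :: nat where "K = fact (3^t + nat \<lceil>C\<rceil> + 7)"
  define d where "d i = Suc i * K + 1" for i
  have K_ge: "3^t + nat \<lceil>C\<rceil> + 7 \<le> K"
    unfolding K_def by (rule fact_ge_self)
  have "d i \<le> 3^t * K + 1" if "i < 3^t" for i
    using that by (simp add: d_def mult_le_mono1 del: mult_Suc)
  then have "\<exists>n\<le>(7 * (3^t * K + 1)) ^ 2 ^ t. \<exists>M \<alpha> \<eta>. is_IFA n {a} M \<alpha> \<eta> \<and>
      (\<forall>m. replicate m a \<in> ifa_lang n {a} M \<alpha> \<eta> \<longleftrightarrow> gate_tree t (\<lambda>i. of_bool (d i dvd m)) = (1 :: rat))"
    by (intro gate_tree_moduli_IFA) (simp_all add: d_def)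
  then obtain n M \<alpha> \<eta> where n: "n \<le> (7 * (3^t * K + 1)) ^ 2 ^ t" and ifa: "is_IFA n {a} M \<alpha> \<eta>"
    and lang: "\<And>m. replicate m a \<in> ifa_lang n {a} M \<alpha> \<eta> \<longleftrightarrow>
                 gate_tree t (\<lambda>i. of_bool (d i dvd m)) = (1 :: rat)"
    by blast
  have "C < real K"
    using K_ge by linarith
  then have small: "C * (real n + 1) ^ e < real K ^ 3 ^ t"
    unfolding t_def using assms K_ge n by (intro polynomial_of_state_bound_less_power) (auto simp: t_def)
  have "l dvd K" if "0 < l" "l < 3^t" for l
    unfolding K_def using that by (intro dvd_fact) auto
  then have coprime_d: "coprime (d i) (d j)" if "i < 3^t" "j < 3^t" "i \<noteq> j" for i j
    unfolding d_def using that by (rule coprime_Suc_mult_add_one)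
  have K_prod: "K ^ 3 ^ t \<le> (\<Prod>i<3^t. d i)"
    using prod_mono[of "{..<3^t}" "\<lambda>_. K" d] by (simp add: d_def)
  have "C * (real n + 1) ^ e < real (card Q)"
    if "is_NFA Q {a} \<delta> I F" "nfa_lang {a} \<delta> I F = ifa_lang n {a} M \<alpha> \<eta>" for Q :: "'q set" and \<delta> I F
  proof -
    have "(\<Prod>i<3^t. d i) \<le> card Q"
      using that(1) by (rule unary_nfa_card_ge_prod_moduli) (use that(2) lang coprime_d in \<open>simp_all add: d_def\<close>)
    with K_prod have "K ^ 3 ^ t \<le> card Q"
      by (rule le_trans)
    then have "real K ^ 3 ^ t \<le> real (card Q)"
      by (metis of_nat_le_iff of_nat_power)
    then show ?thesis
      using small by linarith
  qed
  then show ?thesis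
    using ifa by blast
qed

lemma IFA_beating_polynomial_NFA_size:
  fixes p :: "real poly"
  shows "\<exists>n M \<alpha> \<eta>. is_IFA n {a} M \<alpha> \<eta> \<and>
           (\<forall>(Q :: 'q set) \<delta> I F. is_NFA Q {a} \<delta> I F \<and> nfa_lang {a} \<delta> I F = ifa_lang n {a} M \<alpha> \<eta>
              \<longrightarrow> poly p (real n) < real (card Q))"
proof -
  define C where "C = (\<Sum>i\<le>degree p. \<bar>coeff p i\<bar>)"
  have "0 \<le> C"
    unfolding C_def by (intro sum_nonneg) simp
  moreover have "poly p (real n) \<le> C * (real n + 1) ^ degree p" for n
    unfolding C_def by (rule poly_le_sum_abs_coeff_mult_power) simp
  ultimately show ?thesis
    using unary_IFA_beating_polynomial_NFA_size[of C a "degree p"] by (meson le_less_trans)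
qed

theorem proposition5:
  shows "\<not> (\<exists>p :: real poly. \<forall>n Sig M alpha eta. is_IFA n Sig M alpha eta \<longrightarrow>
            (\<exists>(Q :: nat set) delta I F. is_NFA Q Sig delta I F
               \<and> real (card Q) \<le> poly p (real n)
               \<and> nfa_lang Sig delta I F = ifa_lang n Sig M alpha eta))"
  using IFA_beating_polynomial_NFA_size[where 'q = nat and a = 0] by (meson not_le)

end
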